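(* Let $t>0$ and let $P,Q$ be $t$-convex polygons in the Lorentz plane with parallel edges, i.e. with the same inward unit normals $\eta_1,\dots,\eta_n$ of their fundamental edges, and with support vectors $h(P)=(h_1(P),\dots,h_n(P))$, $h(Q)=(h_1(Q),\dots,h_n(Q))$. Then $$\operatorname{coarea}(P,Q)^2\leq \operatorname{coarea}(P)\operatorname{coarea}(Q),$$ with equality if and only if $P$ and $Q$ are homothetic, i.e. there is $\lambda>0$ with $h_i(P)=\lambda h_i(Q)$ for all $i$.
   Context: Lorentz plane: $\mathbb{R}^2$ with $\langle x,y\rangle_1=x_1y_1-x_2y_2$; $\mathbb{H}=\{x:\langle x,x\rangle_1=-1,x_2>0\}$; $H_s=\begin{pmatrix}\cosh s&\sinh s\\ \sinh s&\cosh s\end{pmatrix}$. A $t$-convex polygon is the intersection, over $k\in\mathbb{Z}$ and $i=1,\dots,n$, of the half-planes $\{x:\langle x,H_t^k\eta_i\rangle_1\le -h_i\}$, for pairwise distinct $\eta_i\in\mathbb{H}$ and $h_i>0$, taken minimal so each $\eta_i$ is the inward normal of a genuine edge. Its fundamental edges are labeled so that $\eta_1$ is the normal of a chosen edge, $\eta_2$ the normal of the edge to its right, etc., up to $\eta_{n+1}=H_t\eta_1$; $h_i(P)$ is the support number of the edge with normal $\eta_i$; $\varphi_i>0$ is defined by $\cosh\varphi_i=-\langle\eta_i,\eta_{i+1}\rangle_1$, so $\varphi_1+\dots+\varphi_n=t$. With indices cyclic mod $n$, the mixed coarea of $h,k\in\mathbb{R}^n$ is $\operatorname{coarea}(h,k)=\frac12\sum_{i=1}^n\big(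 h_i\frac{k_i\cosh\varphi_{i-1}-k_{i-1}}{\sinh\varphi_{i-1}}+h_i\frac{k_i\cosh\varphi_i-k_{i+1}}{\sinh\varphi_i}\big)$; $\operatorname{coarea}(P,Q):=\operatorname{coarea}(h(P),h(Q))$ and $\operatorname{coarea}(P):=\operatorname{coarea}(P,P)$ (which equals half the sum over fundamental edges of support number times Lorentzian edge length). *)

theory Defs
  imports Complex_Main
begin

definition lor :: "real \<times> real \<Rightarrow> real \<times> real \<Rightarrow> real" where
  "lor x y = fst x * fst y - snd x * snd y"

definition hyperboloid :: "(real \<times> real) set" where
  "hyperboloid = {x. lor x x = -1 \<and> snd x > 0}"

definition Hmap :: "real \<Rightarrow> real \<times> real \<Rightarrow> real \<times> real" where
  "Hmap s x = (cosh s * fst x + sinh s * snd x, sinh s * fst x + cosh s * snd x)"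

definition Hpow :: "real \<Rightarrow> int \<Rightarrow> real \<times> real \<Rightarrow> real \<times> real" where
  "Hpow t k = Hmap (of_int k * t)"

definition tpoly_set :: "real \<Rightarrow> nat \<Rightarrow> (nat \<Rightarrow> real \<times> real) \<Rightarrow> (nat \<Rightarrow> real) \<Rightarrow> (real \<times> real) set" where
  "tpoly_set t n eta h = {x. \<forall>k::int. \<forall>i<n. lor x (Hpow t k (eta i)) \<le> - h i}"

definition eta_ext :: "real \<Rightarrow> nat \<Rightarrow> (nat \<Rightarrow> real \<times> real) \<Rightarrow> nat \<Rightarrow> real \<times> real" where
  "eta_ext t n eta i = (if i < n then eta i else Hmap t (eta 0))"

text \<open>(t, n, eta, h) describes a t-convex polygon whose fundamental edges, labeled
  consecutively from left to right, have inward normals eta_0, ..., eta_{n-1}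
  (and eta_n = H_t eta_0) and support numbers h_0, ..., h_{n-1}.\<close>
definition t_convex_polygon :: "real \<Rightarrow> nat \<Rightarrow> (nat \<Rightarrow> real \<times> real) \<Rightarrow> (nat \<Rightarrow> real) \<Rightarrow> bool" where
  "t_convex_polygon t n eta h \<longleftrightarrow>
     n \<ge> 1 \<and>
     (\<forall>i<n. eta i \<in> hyperboloid \<and> h i > 0) \<and>
     inj_on eta {..<n} \<and>
     \<comment> \<open>each eta_i is the normal of a genuine edge (positive length)\<close>
     (\<forall>i<n. \<exists>x y. x \<in> tpoly_set t n eta h \<and> y \<in> tpoly_set t n eta h \<and> x \<noteq> y \<and>
                   lor x (eta i) = - h i \<and> lor y (eta i) = - h i) \<and>
     \<comment> \<open>labelling: eta_{i+1} is the normal of the next edge to the right\<close>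
     (\<forall>i<n. fst (eta_ext t n eta i) < fst (eta_ext t n eta (Suc i)))"

definition phi :: "real \<Rightarrow> nat \<Rightarrow> (nat \<Rightarrow> real \<times> real) \<Rightarrow> nat \<Rightarrow> real" where
  "phi t n eta i = arcosh (- lor (eta_ext t n eta i) (eta_ext t n eta (Suc i)))"

definition coarea :: "real \<Rightarrow> nat \<Rightarrow> (nat \<Rightarrow> real \<times> real) \<Rightarrow> (nat \<Rightarrow> real) \<Rightarrow> (nat \<Rightarrow> real) \<Rightarrow> real" where
  "coarea t n eta h k = (1/2) * (\<Sum>i<n.
      let p = (i + n - 1) mod n; q = Suc i mod n;
          fp = phi t n eta p; fi = phi t n eta i in
      h i * (k i * cosh fp - k p) / sinh fp + h i * (k i * cosh fi - k q) / sinh fi)"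

end

theory Submission
  imports Defs
begin

text \<open>Regrouping the mixed coarea by the angles \<open>\<phi>\<^sub>j\<close> between consecutive normals, the pair
  \<open>(j, j + 1)\<close> contributes \<open>(cosh \<phi>\<^sub>j (h\<^sub>j k\<^sub>j + h\<^sub>j\<^sub>+\<^sub>1 k\<^sub>j\<^sub>+\<^sub>1) - h\<^sub>j k\<^sub>j\<^sub>+\<^sub>1 - h\<^sub>j\<^sub>+\<^sub>1 k\<^sub>j) / sinh \<phi>\<^sub>j\<close>.
  On the diagonal this is \<open>((cosh \<phi>\<^sub>j - 1)(h\<^sub>j\<^sup>2 + h\<^sub>j\<^sub>+\<^sub>1\<^sup>2) + (h\<^sub>j - h\<^sub>j\<^sub>+\<^sub>1)\<^sup>2) / sinh \<phi>\<^sub>j\<close>, and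
  \<open>\<phi>\<^sub>j > 0\<close> because consecutive normals are distinct points of the hyperbola. Hence the mixed coarea
  is a positive definite symmetric bilinear form on support vectors, and the claim is the
  Cauchy--Schwarz inequality with its equality case; positivity of the support numbers makes
  the proportionality factor positive.\<close>

lemma pos_def_form_cauchy_schwarz:
  fixes B :: "('a \<Rightarrow> real) \<Rightarrow> ('a \<Rightarrow> real) \<Rightarrow> real" and A :: "'a set"
  assumes symmetric: "\<And>h k. B h k = B k h"
    and linear: "\<And>a b h k x. B (\<lambda>i. a * h i + b * k i) x = a * B h x + b * B k x"
    and nonneg: "\<And>h. B h h \<ge> 0"
    and definite: "\<And>h. B h h = 0 \<longleftrightarrow> (\<forall>i\<in>A. h i = 0)"
    and k_nonzero: "B k k \<noteq> 0"
  shows "(B h k)\<^sup>2 \<le> B h h * B k k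
    \<and> ((B h k)\<^sup>2 = B h h * B k k \<longleftrightarrow> (\<exists>l. \<forall>i\<in>A. h i = l * k i))"
proof -
  have expand: "B (\<lambda>i. h i - l * k i) (\<lambda>i. h i - l * k i) = B h h - 2 * l * B h k + l\<^sup>2 * B k k"
    for l
  proof -
    have lin: "B (\<lambda>i. h i - l * k i) x = B h x - l * B k x" for x
      using linear[of 1 h "-l" k x] by simp
    show ?thesis
      using lin[of "\<lambda>i. h i - l * k i"] lin[of h] lin[of k] symmetric[of k h]
        symmetric[of k "\<lambda>i. h i - l * k i"] symmetric[of h "\<lambda>i. h i - l * k i"]
      by (simp add: algebra_simps power2_eq_square)
  qed
  have C: "B k k > 0"
    using nonneg[of k] k_nonzero by linarith
  define l where "l = B h k / B k k"
  have defect: "B (\<lambda>i. h i - l * k i) (\<lambda>i. h i - l * k i) = (B h h * B k k - (B h k)\<^sup>2) / B k k"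
    unfolding expand l_def using C by (simp add: field_simps power2_eq_square)
  have ineq: "(B h k)\<^sup>2 \<le> B h h * B k k"
    using nonneg[of "\<lambda>i. h i - l * k i"] C by (simp add: defect zero_le_divide_iff)
  moreover have "(B h k)\<^sup>2 = B h h * B k k \<longleftrightarrow> (\<exists>l. \<forall>i\<in>A. h i = l * k i)"
  proof
    assume "(B h k)\<^sup>2 = B h h * B k k"
    then have "\<forall>i\<in>A. h i - l * k i = 0"
      using definite[of "\<lambda>i. h i - l * k i"] by (simp add: defect)
    then show "\<exists>l. \<forall>i\<in>A. h i = l * k i" by auto
  next
    assume "\<exists>l'. \<forall>i\<in>A. h i = l' * k i"
    then obtain l' where "\<forall>i\<in>A. h i - l' * k i = 0" by auto
    then have "B h h - 2 * l' * B h k + l'\<^sup>2 * B k k = 0"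
      using definite[of "\<lambda>i. h i - l' * k i"] by (simp add: expand)
    then have Bhh: "B h h = 2 * l' * B h k - l'\<^sup>2 * B k k" by linarith
    have "B h h * B k k - (B h k)\<^sup>2 = - (B h k - l' * B k k)\<^sup>2"
      unfolding Bhh by (simp add: algebra_simps power2_eq_square)
    then show "(B h k)\<^sup>2 = B h h * B k k"
      using ineq by (smt (verit) zero_le_power2)
  qed
  ultimately show ?thesis by blast
qed

definition edge_form :: "nat \<Rightarrow> (nat \<Rightarrow> real) \<Rightarrow> (nat \<Rightarrow> real) \<Rightarrow> (nat \<Rightarrow> real) \<Rightarrow> (nat \<Rightarrow> real) \<Rightarrow> real"
  where "edge_form n c s h k = (\<Sum>j<n. let j' = Suc j mod n in
     (c j * (h j * k j + h j' * k j') - h j * k j' - h j' * k j) / s j)"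

lemma edge_form_sym: "edge_form n c s h k = edge_form n c s k h"
  unfolding edge_form_def Let_def by (intro sum.cong) (auto simp: algebra_simps)

lemma edge_form_linear:
  "edge_form n c s (\<lambda>i. a * h i + b * k i) x = a * edge_form n c s h x + b * edge_form n c s k x"
  unfolding edge_form_def Let_def
  by (simp add: sum_distrib_left sum.distrib[symmetric] algebra_simps add_divide_distrib diff_divide_distrib)

lemma edge_form_diag_ge:
  assumes "\<And>j. j < n \<Longrightarrow> c j > 1" and "\<And>j. j < n \<Longrightarrow> s j > 0"
  shows "edge_form n c s h h \<ge> (\<Sum>j<n. (c j - 1) * (h j)\<^sup>2 / s j)"
  unfolding edge_form_def Let_def
proof (rule sum_mono)
  fix j assume "j \<in> {..<n}"
  then have "c j > 1" and "s j > 0" using assms by auto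
  moreover define j' where "j' = Suc j mod n"
  moreover have "c j * (h j * h j + h j' * h j') - h j * h j' - h j' * h j
      = (c j - 1) * (h j)\<^sup>2 + ((c j - 1) * (h j')\<^sup>2 + (h j - h j')\<^sup>2)"
    by (simp add: algebra_simps power2_eq_square)
  ultimately show "(c j - 1) * (h j)\<^sup>2 / s j
      \<le> (c j * (h j * h j + h j' * h j') - h j * h j' - h j' * h j) / s j"
    by (simp add: divide_right_mono)
qed

lemma edge_form_nonneg:
  assumes "\<And>j. j < n \<Longrightarrow> c j > 1" and "\<And>j. j < n \<Longrightarrow> s j > 0"
  shows "edge_form n c s h h \<ge> 0"
proof -
  have "0 \<le> (\<Sum>j<n. (c j - 1) * (h j)\<^sup>2 / s j)"
    using assms by (intro sum_nonneg) (simp add: less_imp_le)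
  also have "\<dots> \<le> edge_form n c s h h"
    using assms by (rule edge_form_diag_ge)
  finally show ?thesis .
qed

lemma edge_form_eq_0_iff:
  assumes "\<And>j. j < n \<Longrightarrow> c j > 1" and "\<And>j. j < n \<Longrightarrow> s j > 0"
  shows "edge_form n c s h h = 0 \<longleftrightarrow> (\<forall>i\<in>{..<n}. h i = 0)"
proof
  have terms_nonneg: "\<forall>j\<in>{..<n}. (c j - 1) * (h j)\<^sup>2 / s j \<ge> 0"
    using assms by (simp add: less_imp_le)
  assume "edge_form n c s h h = 0"
  moreover have "(\<Sum>j<n. (c j - 1) * (h j)\<^sup>2 / s j) \<le> edge_form n c s h h"
    using assms by (rule edge_form_diag_ge)
  moreover have "0 \<le> (\<Sum>j<n. (c j - 1) * (h j)\<^sup>2 / s j)"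
    using terms_nonneg by (intro sum_nonneg) blast
  ultimately have "(\<Sum>j<n. (c j - 1) * (h j)\<^sup>2 / s j) = 0"
    by linarith
  then have "\<forall>j\<in>{..<n}. (c j - 1) * (h j)\<^sup>2 / s j = 0"
    using sum_nonneg_eq_0_iff[of "{..<n}" "\<lambda>j. (c j - 1) * (h j)\<^sup>2 / s j"] terms_nonneg
    by blast
  then show "\<forall>i\<in>{..<n}. h i = 0"
    using assms by (metis divide_eq_0_iff less_irrefl lessThan_iff mult_eq_0_iff
        power_eq_0_iff right_minus_eq)
next
  assume "\<forall>i\<in>{..<n}. h i = 0"
  then show "edge_form n c s h h = 0"
    unfolding edge_form_def Let_def by (intro sum.neutral) auto
qed

lemma Suc_mod_pred_mod: "j < n \<Longrightarrow> (Suc j mod n + n - 1) mod n = j"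
  by (cases "Suc j = n") auto

lemma pred_mod_Suc_mod: "i < n \<Longrightarrow> Suc ((i + n - 1) mod n) mod n = i"
  by (cases i) (auto simp: mod_Suc)

lemma bij_betw_Suc_mod: "0 < n \<Longrightarrow> bij_betw (\<lambda>j. Suc j mod n) {..<n} {..<n}"
  by (rule bij_betw_byWitness[where f'="\<lambda>i. (i + n - 1) mod n"])
    (use Suc_mod_pred_mod[of _ n] pred_mod_Suc_mod[of _ n] in auto)

lemma coarea_eq_edge_form:
  assumes "0 < n"
  shows "coarea t n eta h k
    = edge_form n (\<lambda>j. cosh (phi t n eta j)) (\<lambda>j. sinh (phi t n eta j)) h k / 2"
proof -
  let ?c = "\<lambda>j. cosh (phi t n eta j)" and ?s = "\<lambda>j. sinh (phi t n eta j)"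
  let ?pred = "\<lambda>i. (i + n - 1) mod n" and ?succ = "\<lambda>j. Suc j mod n"
  define left where "left i = h i * (k i * ?c (?pred i) - k (?pred i)) / ?s (?pred i)" for i
  define right where "right i = h i * (k i * ?c i - k (?succ i)) / ?s i" for i
  have "coarea t n eta h k = (\<Sum>i<n. left i + right i) / 2"
    unfolding coarea_def Let_def left_def right_def by simp
  \<comment> \<open>the \<open>\<phi>\<^sub>j\<close>-term of index \<open>j + 1\<close> joins the \<open>\<phi>\<^sub>j\<close>-term of index \<open>j\<close>\<close>
  also have "(\<Sum>i<n. left i + right i) = (\<Sum>j<n. left (?succ j) + right j)"
    using sum.reindex_bij_betw[OF bij_betw_Suc_mod[OF assms], of left] by (simp add: sum.distrib)
  also have "\<dots> = edge_form n ?c ?s h k"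
    unfolding edge_form_def Let_def
  proof (intro sum.cong refl)
    fix j assume "j \<in> {..<n}"
    then have pred_succ: "?pred (?succ j) = j" by (intro Suc_mod_pred_mod) simp
    show "left (?succ j) + right j
      = (?c j * (h j * k j + h (?succ j) * k (?succ j)) - h j * k (?succ j) - h (?succ j) * k j) / ?s j"
      unfolding left_def right_def pred_succ
      by (simp add: add_divide_distrib[symmetric] algebra_simps)
  qed
  finally show ?thesis .
qed

lemma hyperboloid_lor_less:
  assumes "x \<in> hyperboloid" "y \<in> hyperboloid" "fst x \<noteq> fst y"
  shows "lor x y < -1"
proof -
  obtain a b e d where x: "x = (a, b)" and y: "y = (e, d)" by (cases x, cases y)
  have "b\<^sup>2 = 1 + a\<^sup>2" "d\<^sup>2 = 1 + e\<^sup>2" and pos: "b > 0" "d > 0" and "a \<noteq> e"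
    using assms unfolding x y hyperboloid_def lor_def by (auto simp: power2_eq_square)
  moreover have "(b * d)\<^sup>2 - (1 + a * e)\<^sup>2 = (a - e)\<^sup>2" if "b\<^sup>2 = 1 + a\<^sup>2" "d\<^sup>2 = 1 + e\<^sup>2"
    unfolding power_mult_distrib that by (simp add: algebra_simps power2_eq_square)
  ultimately have "(1 + a * e)\<^sup>2 < (b * d)\<^sup>2"
    by (smt (verit) zero_less_power2)
  then have "1 + a * e < b * d"
    using pos by (smt (verit) mult_pos_pos power_less_imp_less_base)
  then show ?thesis unfolding x y lor_def by simp
qed

lemma Hmap_hyperboloid:
  assumes "x \<in> hyperboloid"
  shows "Hmap s x \<in> hyperboloid"
proof -
  obtain a b where x: "x = (a, b)" by (cases x)
  have ab: "a * a - b * b = -1" "b > 0"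
    using assms unfolding x hyperboloid_def lor_def by auto
  have "\<bar>a\<bar>\<^sup>2 < b\<^sup>2"
    using ab by (simp add: power2_eq_square)
  then have "\<bar>a\<bar> < b"
    by (rule power_less_imp_less_base) (use ab in simp)
  moreover have "\<bar>sinh s\<bar>\<^sup>2 < (cosh s)\<^sup>2"
    using hyperbolic_pythagoras[of s] by simp
  then have "\<bar>sinh s\<bar> < cosh s"
    by (rule power_less_imp_less_base) simp
  ultimately have "\<bar>sinh s * a\<bar> < cosh s * b"
    by (simp add: abs_mult mult_strict_mono')
  then have "sinh s * a + cosh s * b > 0"
    by linarith
  moreover have "lor (Hmap s x) (Hmap s x) = (cosh s ^ 2 - sinh s ^ 2) * (a * a - b * b)"
    unfolding x Hmap_def lor_def by (simp add: algebra_simps power2_eq_square)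
  ultimately show ?thesis
    using ab unfolding hyperboloid_def Hmap_def x by (simp add: hyperbolic_pythagoras)
qed

lemma eta_ext_hyperboloid:
  assumes "t_convex_polygon t n eta h" "i \<le> n"
  shows "eta_ext t n eta i \<in> hyperboloid"
  using assms Hmap_hyperboloid unfolding t_convex_polygon_def eta_ext_def by auto

lemma lor_eta_ext_Suc_less:
  assumes "t_convex_polygon t n eta h" "i < n"
  shows "lor (eta_ext t n eta i) (eta_ext t n eta (Suc i)) < -1"
  using assms eta_ext_hyperboloid[OF assms(1), of i] eta_ext_hyperboloid[OF assms(1), of "Suc i"]
  by (intro hyperboloid_lor_less) (auto simp: t_convex_polygon_def)

lemma cosh_phi_gt_1:
  assumes "t_convex_polygon t n eta h" "i < n"
  shows "cosh (phi t n eta i) > 1"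
  using lor_eta_ext_Suc_less[OF assms] unfolding phi_def by simp

lemma sinh_phi_pos:
  assumes "t_convex_polygon t n eta h" "i < n"
  shows "sinh (phi t n eta i) > 0"
  using lor_eta_ext_Suc_less[OF assms] unfolding phi_def by simp

lemma coarea_sym: "0 < n \<Longrightarrow> coarea t n eta h k = coarea t n eta k h"
  by (simp add: coarea_eq_edge_form edge_form_sym[of n _ _ h])

lemma coarea_linear:
  "0 < n \<Longrightarrow> coarea t n eta (\<lambda>i. a * h i + b * k i) x
    = a * coarea t n eta h x + b * coarea t n eta k x"
  by (simp add: coarea_eq_edge_form edge_form_linear)

lemma coarea_nonneg:
  assumes "t_convex_polygon t n eta g"
  shows "coarea t n eta h h \<ge> 0"
proof -
  have "0 < n" using assms unfolding t_convex_polygon_def by simp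
  then show ?thesis
    using edge_form_nonneg[of n "\<lambda>j. cosh (phi t n eta j)" "\<lambda>j. sinh (phi t n eta j)" h]
      cosh_phi_gt_1[OF assms] sinh_phi_pos[OF assms]
    by (simp add: coarea_eq_edge_form)
qed

lemma coarea_eq_0_iff:
  assumes "t_convex_polygon t n eta g"
  shows "coarea t n eta h h = 0 \<longleftrightarrow> (\<forall>i\<in>{..<n}. h i = 0)"
proof -
  have "0 < n" using assms unfolding t_convex_polygon_def by simp
  then show ?thesis
    using edge_form_eq_0_iff[of n "\<lambda>j. cosh (phi t n eta j)" "\<lambda>j. sinh (phi t n eta j)" h]
      cosh_phi_gt_1[OF assms] sinh_phi_pos[OF assms]
    by (simp add: coarea_eq_edge_form)
qed

theorem corollary5p3:
  fixes t :: real and n :: nat and eta :: "nat \<Rightarrow> real \<times> real" and hP hQ :: "nat \<Rightarrow> real"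
  assumes "t > 0"
    and "t_convex_polygon t n eta hP"
    and "t_convex_polygon t n eta hQ"
  shows "(coarea t n eta hP hQ)^2 \<le> coarea t n eta hP hP * coarea t n eta hQ hQ
         \<and> ((coarea t n eta hP hQ)^2 = coarea t n eta hP hP * coarea t n eta hQ hQ
             \<longleftrightarrow> (\<exists>c>0. \<forall>i<n. hP i = c * hQ i))"
proof -
  have n: "0 < n" and hP: "\<forall>i<n. hP i > 0" and hQ: "\<forall>i<n. hQ i > 0"
    using assms(2,3) unfolding t_convex_polygon_def by auto
  have Q_nonzero: "coarea t n eta hQ hQ \<noteq> 0"
    using coarea_eq_0_iff[OF assms(3)] hQ n by force
  have "(coarea t n eta hP hQ)\<^sup>2 \<le> coarea t n eta hP hP * coarea t n eta hQ hQ
    \<and> ((coarea t n eta hP hQ)\<^sup>2 = coarea t n eta hP hP * coarea t n eta hQ hQ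
        \<longleftrightarrow> (\<exists>l. \<forall>i\<in>{..<n}. hP i = l * hQ i))"
    by (rule pos_def_form_cauchy_schwarz[where B = "coarea t n eta" and A = "{..<n}",
          OF coarea_sym[OF n] coarea_linear[OF n] coarea_nonneg[OF assms(3)]
          coarea_eq_0_iff[OF assms(3)] Q_nonzero])
  moreover have "(\<exists>l. \<forall>i\<in>{..<n}. hP i = l * hQ i) \<longleftrightarrow> (\<exists>c>0. \<forall>i<n. hP i = c * hQ i)"
  proof
    assume "\<exists>l. \<forall>i\<in>{..<n}. hP i = l * hQ i"
    then obtain l where l: "\<forall>i<n. hP i = l * hQ i" by auto
    then have "0 < l"
      using hP hQ n zero_less_mult_pos2[of l "hQ 0"] by simp
    then show "\<exists>c>0. \<forall>i<n. hP i = c * hQ i" using l by blast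
  qed auto
  ultimately show ?thesis by simp
qed

end
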